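(* Let $G$ be a graph on $V$, $W\subseteq V$ reducible in $G$, and $v,w\in V\setminus W$ (possibly $v=w$). Then $v$ and $w$ are joined by an edge in $\Gamma_W(G)$ if and only if $\operatorname{rank}_G(W\cup\{v\},W\cup\{w\})>\operatorname{rank}_G(W)$. If moreover the principal submatrix of the adjacency matrix $A$ on $W$ is nonsingular, this holds if and only if $\det\big(A_{W\cup\{v\},\,W\cup\{w\}}\big)\neq 0$ over $\mathbf F_2$.
   Context: A graph means a finite simple graph in which loops are allowed, with adjacency matrix $A$ over $\mathbf F_2$ ($A_{vv}=1$ iff $v$ has a loop). Let $\mathcal V$ be the $\mathbf F_2$-vector space with basis $V$ and $\mathcal E(x,y)=x^TAy$. For $W\subseteq V$, $\langle W\rangle$ is the span of $W$ and $\langle W\rangle^{\perp\mathcal E}=\{x:\mathcal E(x,w)=0\ \forall w\in\langle W\rangle\}$. $W$ is reducible in $G$ if $\langle W\rangle+\langle W\rangle^{\perp\mathcal E}=\mathcal V$. For reducible $W$, $\mathcal E^W(x_1,x_2)=\mathcal E(x_1',x_2')$ where $x_i'\in\langle W\rangle^{\perp\mathcal E}$ with $x_i-x_i'\in\langle W\rangle$, and $\Gamma_W(G)$ is the graph on $V\setminus W$ in which $v,w$ (possibly equal) are joined iff $\mathcal E^W(v,w)=1$. $\operatorname{rank}_G(W_1,W_2)$ denotes the $\mathbf F_2$-rank of the submatrix of $A$ with rows $W_1$ and columns $W_2$, and $\operatorname{rank}_G(W)=\operatorname{rank}_G(W,W)$; $A_{X,Y}$ is the submatrix with rows $X$, columns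 $Y$. *)

theory Defs
  imports Main "HOL-Library.FuncSet"
begin

text \<open>A graph on the finite vertex set V is given by a symmetric adjacency
relation A (loops allowed: A u u means u has a loop).  The F2-vector space
with basis V is modelled by the subsets of V (a vector is identified with its
support); vector addition is symmetric difference, and the basis vector of a
vertex u is the singleton {u}.\<close>

definition vadd :: "'v set \<Rightarrow> 'v set \<Rightarrow> 'v set" where
  "vadd x y = (x - y) \<union> (y - x)"

definition span_basis :: "'v set \<Rightarrow> 'v set set" where
  "span_basis W = Pow W"

text \<open>The bilinear form E(x,y) = x^T A y over F2 (True = 1).\<close>
definition bform :: "('v \<Rightarrow> 'v \<Rightarrow> bool) \<Rightarrow> 'v set \<Rightarrow> 'v set \<Rightarrow> bool" where
  "bform A x y = odd (card {(a, b). a \<in> x \<and> b \<in> y \<and> A a b})"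

definition orth :: "'v set \<Rightarrow> ('v \<Rightarrow> 'v \<Rightarrow> bool) \<Rightarrow> 'v set \<Rightarrow> 'v set set" where
  "orth V A W = {x. x \<subseteq> V \<and> (\<forall>y \<in> span_basis W. \<not> bform A x y)}"

definition reducible :: "'v set \<Rightarrow> ('v \<Rightarrow> 'v \<Rightarrow> bool) \<Rightarrow> 'v set \<Rightarrow> bool" where
  "reducible V A W \<longleftrightarrow>
     (\<forall>z. z \<subseteq> V \<longrightarrow> (\<exists>a \<in> span_basis W. \<exists>b \<in> orth V A W. z = vadd a b))"

definition proj_orth :: "'v set \<Rightarrow> ('v \<Rightarrow> 'v \<Rightarrow> bool) \<Rightarrow> 'v set \<Rightarrow> 'v set \<Rightarrow> 'v set" where
  "proj_orth V A W x = (SOME x'. x' \<in> orth V A W \<and> vadd x x' \<in> span_basis W)"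

definition bformW :: "'v set \<Rightarrow> ('v \<Rightarrow> 'v \<Rightarrow> bool) \<Rightarrow> 'v set \<Rightarrow> 'v set \<Rightarrow> 'v set \<Rightarrow> bool" where
  "bformW V A W x1 x2 = bform A (proj_orth V A W x1) (proj_orth V A W x2)"

definition Gamma :: "'v set \<Rightarrow> ('v \<Rightarrow> 'v \<Rightarrow> bool) \<Rightarrow> 'v set \<Rightarrow> 'v set \<times> ('v \<Rightarrow> 'v \<Rightarrow> bool)" where
  "Gamma V A W = (V - W, \<lambda>v w. v \<in> V - W \<and> w \<in> V - W \<and> bformW V A W {v} {w})"

text \<open>A family
of rows indexed by S is linearly independent over F2 iff no nonempty
subfamily sums to zero.\<close>
definition rows_indep :: "('v \<Rightarrow> 'v \<Rightarrow> bool) \<Rightarrow> 'v set \<Rightarrow> 'v set \<Rightarrow> bool" where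
  "rows_indep A S C \<longleftrightarrow>
     (\<forall>T. T \<subseteq> S \<and> T \<noteq> {} \<longrightarrow> (\<exists>c \<in> C. odd (card {u \<in> T. A u c})))"

definition rank_F2 :: "('v \<Rightarrow> 'v \<Rightarrow> bool) \<Rightarrow> 'v set \<Rightarrow> 'v set \<Rightarrow> nat" where
  "rank_F2 A R C = Max (card ` {S. S \<subseteq> R \<and> rows_indep A S C})"

text \<open>Determinant over F2 of the square submatrix A_{R,C} (|R| = |C|):
since -1 = 1 in F2, det = sum over bijections R -> C of the products of the
entries, i.e. the parity of the number of such bijections supported by A.
(Up to the choice of orderings of R and C, which only affects the sign.)
True means det = 1, i.e. det is nonzero.\<close>
definition det_F2 :: "('v \<Rightarrow> 'v \<Rightarrow> bool) \<Rightarrow> 'v set \<Rightarrow> 'v set \<Rightarrow> bool" where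
  "det_F2 A R C = odd (card {f \<in> extensional R. bij_betw f R C \<and> (\<forall>u \<in> R. A u (f u))})"

end

theory Submission
  imports Defs
begin

(* Reducibility gives the projections of the basis vectors onto the orthogonal
   complement of <W>: they are v + av and w + aw with av, aw subsets of W.  Orthogonality to W
   means that row v of A is the sum of the rows av on the columns W, and that adding the columns
   aw to column w clears column w on the rows W; the entry then left in position (v,w) is
   E(v + av, w + aw) = E^W(v,w).  Column operations preserve rank and determinant, after which
   the bordered matrix has a pivot (or a zero column) in column w, and row v is redundant. *)

subsection \<open>Linear algebra over F2 with vectors represented by their supports\<close>

lemma even_card_vadd:
  assumes "finite X" "finite Y"
  shows "even (card (vadd X Y)) \<longleftrightarrow> (even (card X) \<longleftrightarrow> even (card Y))"
proof -
  have "card X = card (X - Y) + card (X \<inter> Y)"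
    using assms by (simp add: card_Diff_subset_Int card_mono)
  moreover have "card Y = card (Y - X) + card (X \<inter> Y)"
    using assms by (simp add: Int_commute card_Diff_subset_Int card_mono)
  moreover have "card (vadd X Y) = card (X - Y) + card (Y - X)"
    unfolding vadd_def by (rule card_Un_disjoint) (use assms in auto)
  ultimately show ?thesis by presburger
qed

lemma card_insert_filter:
  "finite X \<Longrightarrow> x \<notin> X \<Longrightarrow> card {b \<in> insert x X. P b} = of_bool (P x) + card {b \<in> X. P b}"
  by (cases "P x") (simp_all add: insert_compr[symmetric] Collect_conj_eq)

subsection \<open>Sums of rows and row rank\<close>

definition row_sum :: "('v \<Rightarrow> 'v \<Rightarrow> bool) \<Rightarrow> 'v set \<Rightarrow> 'v set \<Rightarrow> 'v set" where
  "row_sum M C T = {c \<in> C. odd (card {u \<in> T. M u c})}"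

lemma rows_indep_row_sum:
  "rows_indep M S C \<longleftrightarrow> (\<forall>T. T \<subseteq> S \<and> T \<noteq> {} \<longrightarrow> row_sum M C T \<noteq> {})"
  unfolding rows_indep_def row_sum_def by auto

lemma row_sum_vadd:
  assumes "finite T1" "finite T2"
  shows "row_sum M C (vadd T1 T2) = vadd (row_sum M C T1) (row_sum M C T2)"
proof -
  have "{u \<in> vadd T1 T2. M u c} = vadd {u \<in> T1. M u c} {u \<in> T2. M u c}" for c
    unfolding vadd_def by auto
  then have "odd (card {u \<in> vadd T1 T2. M u c}) \<longleftrightarrow>
      (odd (card {u \<in> T1. M u c}) \<noteq> odd (card {u \<in> T2. M u c}))" for c
    using even_card_vadd[of "{u \<in> T1. M u c}" "{u \<in> T2. M u c}"] assms by simp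
  then show ?thesis unfolding row_sum_def vadd_def by blast
qed

lemma row_sum_insert:
  assumes "finite T" "x \<notin> T"
  shows "row_sum M C (insert x T) = vadd (row_sum M C T) (row_sum M C {x})"
proof -
  have "insert x T = vadd T {x}" using assms unfolding vadd_def by auto
  then show ?thesis using row_sum_vadd[of T "{x}" M C] assms by simp
qed

lemma row_sum_span:
  assumes "finite X" "finite S"
    and "\<forall>x \<in> X. \<exists>T \<subseteq> S. row_sum M C {x} = row_sum M C T"
  shows "\<exists>T \<subseteq> S. row_sum M C X = row_sum M C T"
  using assms
proof (induction X rule: finite_induct)
  case empty
  show ?case by (rule exI[of _ "{}"]) (simp add: row_sum_def)
next
  case (insert x X)
  obtain T1 where T1: "T1 \<subseteq> S" "row_sum M C X = row_sum M C T1"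
    using insert.IH insert.prems by blast
  obtain T2 where T2: "T2 \<subseteq> S" "row_sum M C {x} = row_sum M C T2"
    using insert.prems by auto
  have fin: "finite T1" "finite T2" using T1(1) T2(1) insert.prems(1) finite_subset by blast+
  have "row_sum M C (insert x X) = row_sum M C (vadd T1 T2)"
    using row_sum_insert[OF insert.hyps] row_sum_vadd[OF fin] T1(2) T2(2) by simp
  moreover have "vadd T1 T2 \<subseteq> S" using T1(1) T2(1) unfolding vadd_def by auto
  ultimately show ?case by blast
qed

lemma rows_indep_subset: "rows_indep M S C \<Longrightarrow> T \<subseteq> S \<Longrightarrow> rows_indep M T C"
  unfolding rows_indep_def by blast

lemma rows_indep_insert:
  assumes "finite S" "x \<notin> S" "rows_indep M S C"
    and "\<not> (\<exists>T \<subseteq> S. row_sum M C {x} = row_sum M C T)"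
  shows "rows_indep M (insert x S) C"
  unfolding rows_indep_row_sum
proof (intro allI impI)
  fix T assume T: "T \<subseteq> insert x S \<and> T \<noteq> {}"
  show "row_sum M C T \<noteq> {}"
  proof (cases "x \<in> T")
    case False
    then show ?thesis using assms(3) T unfolding rows_indep_row_sum by blast
  next
    case True
    have T': "T - {x} \<subseteq> S" "finite (T - {x})" using T assms(1) finite_subset by auto
    have "row_sum M C T = vadd (row_sum M C (T - {x})) (row_sum M C {x})"
      using row_sum_insert[OF T'(2), of x M C] True by (simp add: insert_absorb)
    moreover have "row_sum M C {x} \<noteq> row_sum M C (T - {x})" using assms(4) T'(1) by blast
    ultimately show ?thesis unfolding vadd_def by blast
  qed
qed

lemma rows_indep_not_in_span:
  assumes "finite S" "x \<notin> S" "rows_indep M (insert x S) C"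
  shows "\<not> (\<exists>T \<subseteq> S. row_sum M C {x} = row_sum M C T)"
proof
  assume "\<exists>T \<subseteq> S. row_sum M C {x} = row_sum M C T"
  then obtain T where T: "T \<subseteq> S" "row_sum M C {x} = row_sum M C T" by blast
  have "finite T" using T(1) assms(1) finite_subset by blast
  moreover have "x \<notin> T" using T(1) assms(2) by blast
  ultimately have "row_sum M C (insert x T) = vadd (row_sum M C T) (row_sum M C T)"
    using row_sum_insert[of T x M C] T(2) by simp
  then have "row_sum M C (insert x T) = {}" unfolding vadd_def by simp
  moreover have "insert x T \<subseteq> insert x S" using T(1) by blast
  ultimately show False using assms(3) unfolding rows_indep_row_sum by blast
qed

lemma rank_finite: "finite R \<Longrightarrow> finite (card ` {S. S \<subseteq> R \<and> rows_indep M S C})"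
  by (rule finite_imageI) (rule finite_subset[of _ "Pow R"], auto)

lemma rank_ge: "finite R \<Longrightarrow> S \<subseteq> R \<Longrightarrow> rows_indep M S C \<Longrightarrow> card S \<le> rank_F2 M R C"
  unfolding rank_F2_def by (rule Max_ge) (auto intro: rank_finite)

lemma rank_attained:
  assumes "finite R"
  obtains S where "S \<subseteq> R" "rows_indep M S C" "card S = rank_F2 M R C"
proof -
  have "{} \<in> {S. S \<subseteq> R \<and> rows_indep M S C}" unfolding rows_indep_def by blast
  then have "rank_F2 M R C \<in> card ` {S. S \<subseteq> R \<and> rows_indep M S C}"
    unfolding rank_F2_def by (intro Max_in rank_finite assms) blast
  then obtain S where "S \<subseteq> R" "rows_indep M S C" "card S = rank_F2 M R C" by auto
  then show ?thesis by (rule that)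
qed

lemma rank_le:
  assumes "finite R" "\<And>S. S \<subseteq> R \<Longrightarrow> rows_indep M S C \<Longrightarrow> card S \<le> k"
  shows "rank_F2 M R C \<le> k"
proof -
  obtain S where "S \<subseteq> R" "rows_indep M S C" "card S = rank_F2 M R C"
    using rank_attained[OF assms(1)] .
  then show ?thesis using assms(2)[of S] by simp
qed

lemma rank_cong:
  assumes "\<And>S. S \<subseteq> R \<Longrightarrow> rows_indep M S C \<longleftrightarrow> rows_indep N S D"
  shows "rank_F2 M R C = rank_F2 N R D"
proof -
  have "{S. S \<subseteq> R \<and> rows_indep M S C} = {S. S \<subseteq> R \<and> rows_indep N S D}"
    using assms by blast
  then show ?thesis unfolding rank_F2_def by simp
qed

lemma rank_cong_entries:
  assumes "\<forall>u \<in> R. \<forall>c \<in> C. M u c = N u c"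
  shows "rank_F2 M R C = rank_F2 N R C"
proof (rule rank_cong)
  fix S assume S: "S \<subseteq> R"
  have "(\<exists>c \<in> C. odd (card {u \<in> T. M u c})) \<longleftrightarrow> (\<exists>c \<in> C. odd (card {u \<in> T. N u c}))"
    if "T \<subseteq> S" for T
  proof (rule bex_cong[OF refl])
    fix c assume "c \<in> C"
    then have "{u \<in> T. M u c} = {u \<in> T. N u c}" using assms S that by blast
    then show "odd (card {u \<in> T. M u c}) \<longleftrightarrow> odd (card {u \<in> T. N u c})" by simp
  qed
  then show "rows_indep M S C \<longleftrightarrow> rows_indep N S C" unfolding rows_indep_def by blast
qed

lemma rows_indep_zero_col:
  assumes "\<forall>u \<in> S. \<not> M u w"
  shows "rows_indep M S (insert w C) \<longleftrightarrow> rows_indep M S C"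
proof -
  have "(\<exists>c \<in> insert w C. odd (card {u \<in> T. M u c})) \<longleftrightarrow> (\<exists>c \<in> C. odd (card {u \<in> T. M u c}))"
    if "T \<subseteq> S" for T
  proof -
    have "{u \<in> T. M u w} = {}" using assms that by blast
    then have "even (card {u \<in> T. M u w})" by (simp only: card.empty even_zero)
    then show ?thesis by auto
  qed
  then show ?thesis unfolding rows_indep_def by blast
qed

lemma rank_zero_col:
  "\<forall>u \<in> R. \<not> M u w \<Longrightarrow> rank_F2 M R (insert w C) = rank_F2 M R C"
  by (rule rank_cong, rule rows_indep_zero_col) blast

lemma rank_pivot:
  assumes R: "finite R" "v \<notin> R" and zero: "\<forall>u \<in> R. \<not> M u w" and pivot: "M v w"
  shows "rank_F2 M (insert v R) (insert w C) = Suc (rank_F2 M R C)"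
proof (rule antisym)
  show "rank_F2 M (insert v R) (insert w C) \<le> Suc (rank_F2 M R C)"
  proof (rule rank_le)
    fix S assume S: "S \<subseteq> insert v R" "rows_indep M S (insert w C)"
    have "rows_indep M (S - {v}) (insert w C)" using rows_indep_subset[OF S(2)] by blast
    moreover have "\<forall>u \<in> S - {v}. \<not> M u w" using S(1) zero by blast
    ultimately have "rows_indep M (S - {v}) C" using rows_indep_zero_col[of "S - {v}" M w C] by simp
    then have "card (S - {v}) \<le> rank_F2 M R C" using rank_ge[OF R(1)] S(1) by blast
    moreover have "card S \<le> Suc (card (S - {v}))"
    proof -
      have "finite S" using S(1) R(1) finite_subset by blast
      then show ?thesis by (cases "v \<in> S") (simp_all add: card_Suc_Diff1)
    qed
    ultimately show "card S \<le> Suc (rank_F2 M R C)" by simp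
  qed (use R in simp)
next
  obtain S0 where S0: "S0 \<subseteq> R" "rows_indep M S0 C" "card S0 = rank_F2 M R C"
    using rank_attained[OF R(1)] .
  have "rows_indep M (insert v S0) (insert w C)"
    unfolding rows_indep_def
  proof (intro allI impI)
    fix T assume T: "T \<subseteq> insert v S0 \<and> T \<noteq> {}"
    show "\<exists>c \<in> insert w C. odd (card {u \<in> T. M u c})"
    proof (cases "v \<in> T")
      case True
      have "{u \<in> T. M u w} = {v}" using True T S0(1) zero pivot by auto
      then show ?thesis by simp
    next
      case False
      then have "T \<subseteq> S0" using T by blast
      then show ?thesis using S0(2) T unfolding rows_indep_def by blast
    qed
  qed
  moreover have "card (insert v S0) = Suc (rank_F2 M R C)"
  proof -
    have "finite S0" "v \<notin> S0" using S0(1) R finite_subset by blast+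
    then show ?thesis using S0(3) by simp
  qed
  moreover have "insert v S0 \<subseteq> insert v R" using S0(1) by blast
  ultimately show "Suc (rank_F2 M R C) \<le> rank_F2 M (insert v R) (insert w C)"
    using rank_ge[of "insert v R" "insert v S0" M "insert w C"] R(1) by simp
qed

(* Steinitz exchange: if row v is the sum of the rows av of R, an independent family through v
   can be replaced by one of the same size inside R. *)
lemma rows_indep_exchange:
  assumes R: "finite R" "v \<notin> R" and av: "av \<subseteq> R"
    and dep: "row_sum M C {v} = row_sum M C av"
    and S: "S \<subseteq> insert v R" "v \<in> S" "rows_indep M S C"
  obtains S' where "S' \<subseteq> R" "rows_indep M S' C" "card S' = card S"
proof -
  define S0 where "S0 = S - {v}"
  have S0: "S0 \<subseteq> R" "finite S0" "v \<notin> S0" "S = insert v S0"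
    using S R finite_subset unfolding S0_def by auto
  have not_span_v: "\<not> (\<exists>T \<subseteq> S0. row_sum M C {v} = row_sum M C T)"
    using rows_indep_not_in_span[OF S0(2,3)] S(3) S0(4) by simp
  have "\<exists>x \<in> av. \<not> (\<exists>T \<subseteq> S0. row_sum M C {x} = row_sum M C T)"
  proof (rule ccontr)
    assume "\<not> ?thesis"
    then have "\<exists>T \<subseteq> S0. row_sum M C av = row_sum M C T"
      using row_sum_span[of av S0 M C] av R(1) S0(2) finite_subset by blast
    then show False using not_span_v dep by simp
  qed
  then obtain x where x: "x \<in> av" "\<not> (\<exists>T \<subseteq> S0. row_sum M C {x} = row_sum M C T)"
    by blast
  have "x \<notin> S0"
  proof
    assume "x \<in> S0"
    then have "{x} \<subseteq> S0" by simp
    then show False using x(2) by blast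
  qed
  have "rows_indep M (insert x S0) C"
    using rows_indep_insert[OF S0(2) \<open>x \<notin> S0\<close> _ x(2)] rows_indep_subset[OF S(3)]
    unfolding S0_def by blast
  moreover have "insert x S0 \<subseteq> R" using S0(1) x(1) av by blast
  moreover have "card (insert x S0) = card S" using S0 \<open>x \<notin> S0\<close> by simp
  ultimately show ?thesis using that by blast
qed

lemma rank_dependent_row:
  assumes R: "finite R" "v \<notin> R" and av: "av \<subseteq> R"
    and row: "\<forall>c \<in> C. M v c \<longleftrightarrow> odd (card {a \<in> av. M a c})"
  shows "rank_F2 M (insert v R) C = rank_F2 M R C"
proof (rule antisym)
  have dep: "row_sum M C {v} = row_sum M C av"
  proof -
    have "row_sum M C {v} = {c \<in> C. M v c}"
      unfolding row_sum_def by (auto simp: Collect_conv_if)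
    also have "\<dots> = row_sum M C av" unfolding row_sum_def using row by blast
    finally show ?thesis .
  qed
  show "rank_F2 M (insert v R) C \<le> rank_F2 M R C"
  proof (rule rank_le)
    fix S assume S: "S \<subseteq> insert v R" "rows_indep M S C"
    show "card S \<le> rank_F2 M R C"
    proof (cases "v \<in> S")
      case True
      then obtain S' where "S' \<subseteq> R" "rows_indep M S' C" "card S' = card S"
        using rows_indep_exchange[OF R av dep S(1) _ S(2)] by blast
      then show ?thesis using rank_ge[OF R(1), of S' M C] by simp
    next
      case False
      then show ?thesis using rank_ge[OF R(1)] S by blast
    qed
  qed (use R in simp)
next
  obtain S0 where "S0 \<subseteq> R" "rows_indep M S0 C" "card S0 = rank_F2 M R C"
    using rank_attained[OF R(1)] .
  then show "rank_F2 M R C \<le> rank_F2 M (insert v R) C"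
    using rank_ge[of "insert v R" S0 M C] R(1) by auto
qed

subsection \<open>Elementary column operations\<close>

definition add_cols :: "('v \<Rightarrow> 'v \<Rightarrow> bool) \<Rightarrow> 'v \<Rightarrow> 'v set \<Rightarrow> 'v \<Rightarrow> 'v \<Rightarrow> bool" where
  "add_cols M w B = (\<lambda>u c. if c = w then M u w \<noteq> odd (card {b \<in> B. M u b}) else M u c)"

lemma card_filter_eq_sum: "finite B \<Longrightarrow> card {b \<in> B. P b} = (\<Sum>b \<in> B. of_bool (P b))"
  by (simp add: Int_def conj_commute)

lemma sum_card_swap:
  assumes "finite T" "finite B"
  shows "(\<Sum>u \<in> T. card {b \<in> B. M u b}) = (\<Sum>b \<in> B. card {u \<in> T. M u b})"
proof -
  have "(\<Sum>u \<in> T. card {b \<in> B. M u b}) = (\<Sum>u \<in> T. \<Sum>b \<in> B. of_bool (M u b))"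
    using assms(2) by (simp only: card_filter_eq_sum)
  also have "\<dots> = (\<Sum>b \<in> B. \<Sum>u \<in> T. of_bool (M u b))" by (rule sum.swap)
  also have "\<dots> = (\<Sum>b \<in> B. card {u \<in> T. M u b})"
    using assms(1) by (simp only: card_filter_eq_sum)
  finally show ?thesis .
qed

lemma odd_card_add_cols:
  assumes "finite T" "finite B"
  shows "odd (card {u \<in> T. add_cols M w B u w}) \<longleftrightarrow>
    (odd (card {u \<in> T. M u w}) \<noteq> odd (\<Sum>b \<in> B. card {u \<in> T. M u b}))"
proof -
  define f where "f u = of_bool (M u w) + card {b \<in> B. M u b}" for u
  have "odd (f u) \<longleftrightarrow> add_cols M w B u w" for u
    by (cases "M u w") (simp_all add: f_def add_cols_def)
  then have "{u \<in> T. odd (f u)} = {u \<in> T. add_cols M w B u w}" by simp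
  moreover have "sum f T = card {u \<in> T. M u w} + (\<Sum>b \<in> B. card {u \<in> T. M u b})"
    unfolding f_def sum.distrib
    using card_filter_eq_sum[OF assms(1), of "\<lambda>u. M u w"] sum_card_swap[OF assms] by simp
  ultimately show ?thesis using even_sum_iff[OF assms(1), of f] by simp
qed

lemma row_sum_add_cols_empty:
  assumes T: "finite T" and B: "finite B" "B \<subseteq> C - {w}"
  shows "row_sum (add_cols M w B) C T = {} \<longleftrightarrow> row_sum M C T = {}"
proof -
  have off_w: "c \<in> row_sum (add_cols M w B) C T \<longleftrightarrow> c \<in> row_sum M C T" if "c \<noteq> w" for c
    using that unfolding row_sum_def add_cols_def by simp
  have at_w: "w \<in> row_sum (add_cols M w B) C T \<longleftrightarrow> w \<in> row_sum M C T"
    if "\<forall>c \<in> C - {w}. c \<notin> row_sum M C T"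
  proof -
    have "even (card {u \<in> T. M u b})" if "b \<in> B" for b
      using \<open>\<forall>c \<in> C - {w}. c \<notin> row_sum M C T\<close> B(2) that unfolding row_sum_def by blast
    then have "even (\<Sum>b \<in> B. card {u \<in> T. M u b})" by (intro dvd_sum) simp
    then show ?thesis using odd_card_add_cols[OF T B(1), of M w] unfolding row_sum_def by simp
  qed
  have "(\<forall>c. c \<notin> row_sum (add_cols M w B) C T) \<longleftrightarrow> (\<forall>c. c \<notin> row_sum M C T)"
  proof -
    have "(\<forall>c \<in> C - {w}. c \<notin> row_sum (add_cols M w B) C T) \<longleftrightarrow>
        (\<forall>c \<in> C - {w}. c \<notin> row_sum M C T)"
      using off_w by simp
    moreover have "c \<notin> row_sum N C T" if "c \<notin> C" for N c
      using that unfolding row_sum_def by simp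
    ultimately show ?thesis using at_w by (metis Diff_iff singletonD)
  qed
  then show ?thesis by simp
qed

lemma rank_add_cols:
  assumes "finite R" "finite B" "B \<subseteq> C - {w}"
  shows "rank_F2 (add_cols M w B) R C = rank_F2 M R C"
proof (rule rank_cong)
  fix S assume S: "S \<subseteq> R"
  have "row_sum (add_cols M w B) C T = {} \<longleftrightarrow> row_sum M C T = {}" if "T \<subseteq> S" for T
  proof -
    have "finite T" using finite_subset[OF subset_trans[OF that S] assms(1)] .
    then show ?thesis by (rule row_sum_add_cols_empty[OF _ assms(2,3)])
  qed
  then show "rows_indep (add_cols M w B) S C \<longleftrightarrow> rows_indep M S C"
    unfolding rows_indep_row_sum by simp
qed

subsection \<open>Determinants over F2\<close>

definition supp_bij :: "('v \<Rightarrow> 'v \<Rightarrow> bool) \<Rightarrow> 'v set \<Rightarrow> 'v set \<Rightarrow> ('v \<Rightarrow> 'v) set" where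
  "supp_bij M R C = {f \<in> extensional R. bij_betw f R C \<and> (\<forall>u \<in> R. M u (f u))}"

lemma det_F2_supp_bij: "det_F2 M R C \<longleftrightarrow> odd (card (supp_bij M R C))"
  unfolding det_F2_def supp_bij_def ..

lemma finite_supp_bij:
  assumes "finite R" "finite C"
  shows "finite (supp_bij M R C)"
proof (rule finite_subset[of _ "PiE R (\<lambda>_. C)"])
  show "supp_bij M R C \<subseteq> PiE R (\<lambda>_. C)"
    unfolding supp_bij_def by (auto simp: PiE_def bij_betw_def)
  show "finite (PiE R (\<lambda>_. C))" using assms by (simp add: finite_PiE)
qed

lemma supp_bij_cong:
  assumes "\<forall>u \<in> R. \<forall>c \<in> C. M u c = N u c"
  shows "supp_bij M R C = supp_bij N R C"
  unfolding supp_bij_def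
proof (intro Collect_cong conj_cong refl)
  fix f assume "bij_betw f R C"
  then have "\<forall>u \<in> R. f u \<in> C" unfolding bij_betw_def by blast
  then show "(\<forall>u \<in> R. M u (f u)) \<longleftrightarrow> (\<forall>u \<in> R. N u (f u))" using assms by simp
qed

definition set_col :: "('v \<Rightarrow> 'v \<Rightarrow> bool) \<Rightarrow> 'v \<Rightarrow> ('v \<Rightarrow> bool) \<Rightarrow> 'v \<Rightarrow> 'v \<Rightarrow> bool" where
  "set_col M w x = (\<lambda>u c. if c = w then x u else M u c)"

lemma det_set_col_add:
  assumes fin: "finite R" "finite C" and wC: "w \<in> C"
  shows "det_F2 (set_col M w (\<lambda>u. x u \<noteq> y u)) R C \<longleftrightarrow>
    (det_F2 (set_col M w x) R C \<noteq> det_F2 (set_col M w y) R C)"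
proof -
  define F where "F = supp_bij (set_col M w (\<lambda>_. True)) R C"
  define hits where "hits z = {f \<in> F. \<forall>u \<in> R. f u = w \<longrightarrow> z u}" for z
  have supp_hits: "supp_bij (set_col M w z) R C = hits z" for z
    unfolding hits_def F_def supp_bij_def set_col_def by auto
  have hits_at: "f \<in> hits z \<longleftrightarrow> z (the_inv_into R f w)" if "f \<in> F" for f z
  proof -
    define u0 where "u0 = the_inv_into R f w"
    have b: "bij_betw f R C" using that unfolding F_def supp_bij_def by blast
    then have u0: "u0 \<in> R" "f u0 = w"
      using wC unfolding u0_def by (auto simp: bij_betw_def the_inv_into_into f_the_inv_into_f)
    have unique: "u = u0" if "u \<in> R" "f u = w" for u
      using b that unfolding u0_def by (auto simp: bij_betw_def the_inv_into_f_eq)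
    have "(\<forall>u \<in> R. f u = w \<longrightarrow> z u) \<longleftrightarrow> z u0"
    proof
      assume "\<forall>u \<in> R. f u = w \<longrightarrow> z u"
      then show "z u0" using u0 by simp
    next
      assume "z u0"
      then show "\<forall>u \<in> R. f u = w \<longrightarrow> z u" using unique by blast
    qed
    then show ?thesis using \<open>f \<in> F\<close> unfolding hits_def u0_def by simp
  qed
  have "f \<in> hits (\<lambda>u. x u \<noteq> y u) \<longleftrightarrow> f \<in> vadd (hits x) (hits y)" for f
  proof (cases "f \<in> F")
    case True
    then show ?thesis using hits_at[OF True] unfolding vadd_def by auto
  next
    case False
    then show ?thesis unfolding vadd_def hits_def by simp
  qed
  then have "hits (\<lambda>u. x u \<noteq> y u) = vadd (hits x) (hits y)" by (rule set_eqI)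
  moreover have "finite (hits z)" for z
    unfolding hits_def F_def using finite_supp_bij[OF fin] by simp
  ultimately show ?thesis
    unfolding det_F2_supp_bij supp_hits using even_card_vadd[of "hits x" "hits y"] by simp
qed

lemma even_card_involution:
  assumes "finite X" "\<forall>x \<in> X. g x \<in> X \<and> g (g x) = x \<and> g x \<noteq> x"
  shows "even (card X)"
  using assms
proof (induction "card X" arbitrary: X rule: less_induct)
  case less
  show ?case
  proof (cases "X = {}")
    case False
    then obtain x where x: "x \<in> X" by blast
    define Y where "Y = X - {x, g x}"
    have gx: "g x \<in> X" "g x \<noteq> x" using less.prems x by auto
    have card_X: "card X = card Y + 2"
    proof -
      have "card Y = card X - 2"
        unfolding Y_def using x gx less.prems(1) by (simp add: card_Diff_subset)
      moreover have "2 \<le> card X"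
        using card_mono[OF less.prems(1), of "{x, g x}"] x gx by simp
      ultimately show ?thesis by simp
    qed
    have "\<forall>y \<in> Y. g y \<in> Y \<and> g (g y) = y \<and> g y \<noteq> y"
    proof
      fix y assume "y \<in> Y"
      then have y: "y \<in> X" "y \<noteq> x" "y \<noteq> g x" unfolding Y_def by auto
      then have "g y \<in> X" "g (g y) = y" "g y \<noteq> y" using less.prems by auto
      moreover have "g y \<noteq> x" using y \<open>g (g y) = y\<close> by auto
      moreover have "g y \<noteq> g x" using y \<open>g (g y) = y\<close> less.prems x by metis
      ultimately show "g y \<in> Y \<and> g (g y) = y \<and> g y \<noteq> y" unfolding Y_def by auto
    qed
    moreover have "finite Y" using less.prems(1) unfolding Y_def by simp
    ultimately have "even (card Y)" using less.hyps card_X by simp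
    then show ?thesis using card_X by simp
  qed simp
qed

(* A matrix with two equal columns has determinant zero: swapping the two columns is a
   fixed-point-free involution of the supported bijections. *)
lemma det_repeated_col:
  assumes fin: "finite R" "finite C" and C: "w \<in> C" "b \<in> C" "b \<noteq> w"
  shows "\<not> det_F2 (set_col M w (\<lambda>u. M u b)) R C"
proof -
  define N where "N = set_col M w (\<lambda>u. M u b)"
  define swap where "swap c = (if c = b then w else if c = w then b else c)" for c
  define g where "g f = (\<lambda>u. if u \<in> R then swap (f u) else undefined)" for f :: "'a \<Rightarrow> 'a"
  have swap_swap: "swap (swap c) = c" for c unfolding swap_def by auto
  have swap_bij: "bij_betw swap C C"
    by (rule bij_betwI[of swap C C swap]) (auto simp: swap_def C swap_swap)
  have N_swap: "N u (swap c) = N u c" for u c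
    unfolding N_def set_col_def swap_def using C(3) by auto
  have "\<forall>f \<in> supp_bij N R C. g f \<in> supp_bij N R C \<and> g (g f) = f \<and> g f \<noteq> f"
  proof
    fix f assume "f \<in> supp_bij N R C"
    then have f: "f \<in> extensional R" "bij_betw f R C" "\<forall>u \<in> R. N u (f u)"
      unfolding supp_bij_def by auto
    have "bij_betw (g f) R C"
      using bij_betw_trans[OF f(2) swap_bij] by (rule bij_betw_cong[THEN iffD1, rotated]) (simp add: g_def)
    then have "g f \<in> supp_bij N R C"
      using f(3) N_swap unfolding supp_bij_def by (auto simp: g_def extensional_def)
    moreover have "g (g f) = f"
      using f(1) swap_swap by (auto simp: g_def extensional_def)
    moreover have "g f \<noteq> f"
    proof
      assume fixed: "g f = f"
      obtain u where "u \<in> R" "f u = b" using f(2) C(2) unfolding bij_betw_def by auto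
      then have "g f u = w" unfolding g_def swap_def by simp
      then show False using fixed \<open>f u = b\<close> C(3) by simp
    qed
    ultimately show "g f \<in> supp_bij N R C \<and> g (g f) = f \<and> g f \<noteq> f" by blast
  qed
  then have "even (card (supp_bij N R C))"
    using even_card_involution finite_supp_bij[OF fin] by blast
  then show ?thesis unfolding det_F2_supp_bij N_def by simp
qed

lemma det_add_cols:
  assumes fin: "finite R" "finite C" and wC: "w \<in> C" and B: "finite B" "B \<subseteq> C - {w}"
  shows "det_F2 (add_cols M w B) R C \<longleftrightarrow> det_F2 M R C"
  using B
proof (induction B rule: finite_induct)
  case empty
  have "add_cols M w {} = M" unfolding add_cols_def by (intro ext) simp
  then show ?case by simp
next
  case (insert b B)
  define MB where "MB = add_cols M w B"
  have b: "b \<in> C" "b \<noteq> w" using insert.prems by auto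
  have MB_b: "MB u b = M u b" for u unfolding MB_def add_cols_def using b(2) by simp
  have step: "add_cols M w (insert b B) = set_col MB w (\<lambda>u. MB u w \<noteq> MB u b)"
  proof (intro ext)
    fix u c
    have "card {b' \<in> insert b B. M u b'} = of_bool (M u b) + card {b' \<in> B. M u b'}"
      using card_insert_filter[OF insert.hyps] .
    then show "add_cols M w (insert b B) u c = set_col MB w (\<lambda>u. MB u w \<noteq> MB u b) u c"
      unfolding set_col_def MB_b unfolding MB_def add_cols_def by auto
  qed
  have unchanged: "set_col MB w (\<lambda>u. MB u w) = MB" unfolding set_col_def by (intro ext) simp
  have "det_F2 (add_cols M w (insert b B)) R C \<longleftrightarrow>
      (det_F2 MB R C \<noteq> det_F2 (set_col MB w (\<lambda>u. MB u b)) R C)"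
    using det_set_col_add[OF fin wC, of MB "\<lambda>u. MB u w" "\<lambda>u. MB u b"] step unchanged by simp
  moreover have "\<not> det_F2 (set_col MB w (\<lambda>u. MB u b)) R C"
    by (rule det_repeated_col[OF fin wC b])
  moreover have "det_F2 MB R C \<longleftrightarrow> det_F2 M R C"
    unfolding MB_def using insert.IH insert.prems by simp
  ultimately show ?case by simp
qed

lemma det_cong_entries:
  "\<forall>u \<in> R. \<forall>c \<in> C. M u c = N u c \<Longrightarrow> det_F2 M R C \<longleftrightarrow> det_F2 N R C"
  unfolding det_F2_supp_bij using supp_bij_cong[of R C M N] by simp

lemma supp_bij_maps_pivot:
  assumes zero: "\<forall>u \<in> W. \<not> M u w" and f: "f \<in> supp_bij M (insert v W) (insert w W)"
  shows "f v = w"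
proof -
  have bij: "bij_betw f (insert v W) (insert w W)" and supp: "\<forall>u \<in> insert v W. M u (f u)"
    using f unfolding supp_bij_def by auto
  have "w \<in> f ` insert v W" using bij unfolding bij_betw_def by simp
  then obtain u where u: "u \<in> insert v W" "f u = w" by blast
  then have "M u w" using supp by auto
  then show ?thesis using u zero by auto
qed

lemma supp_bij_border:
  assumes v: "v \<notin> W" and w: "w \<notin> W" and pivot: "M v w" and zero: "\<forall>u \<in> W. \<not> M u w"
  shows "bij_betw (\<lambda>g. g(v := w)) (supp_bij M W W) (supp_bij M (insert v W) (insert w W))"
    (is "bij_betw _ _ ?S")
proof (rule bij_betw_byWitness[where f' = "\<lambda>f. restrict f W"])
  note maps_v = supp_bij_maps_pivot[of W M w _ v, OF zero]
  show "\<forall>g \<in> supp_bij M W W. restrict (g(v := w)) W = g"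
    using v by (auto simp: supp_bij_def restrict_def extensional_def)
  show "\<forall>f \<in> ?S. (restrict f W)(v := w) = f"
  proof (intro ballI ext)
    fix f u assume "f \<in> ?S"
    then show "((restrict f W)(v := w)) u = f u"
      using maps_v[OF \<open>f \<in> ?S\<close>] by (cases "u = v") (auto simp: supp_bij_def extensional_def)
  qed
  show "(\<lambda>g. g(v := w)) ` supp_bij M W W \<subseteq> ?S"
  proof
    fix f assume "f \<in> (\<lambda>g. g(v := w)) ` supp_bij M W W"
    then obtain g where g: "g \<in> extensional W" "bij_betw g W W" "\<forall>u \<in> W. M u (g u)"
      and f: "f = g(v := w)" unfolding supp_bij_def by auto
    have "bij_betw f W W \<longleftrightarrow> bij_betw g W W" unfolding f using v by (intro bij_betw_cong) auto
    then have "bij_betw f W W" using g(2) by simp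
    then have "bij_betw f (insert v W) (insert w W)"
      using notIn_Un_bij_betw[of v W f W] v w unfolding f by simp
    then show "f \<in> ?S"
      using g(1,3) pivot v unfolding f supp_bij_def by (auto simp: extensional_def)
  qed
  show "(\<lambda>f. restrict f W) ` ?S \<subseteq> supp_bij M W W"
  proof
    fix g assume "g \<in> (\<lambda>f. restrict f W) ` ?S"
    then obtain f where f: "f \<in> ?S" and g: "g = restrict f W" by blast
    have "bij_betw f (insert v W - {v}) (insert w W - {w})"
      using f maps_v[OF f] unfolding supp_bij_def by (intro bij_betw_DiffI) auto
    then have "bij_betw f W W" using v w by simp
    moreover have "bij_betw g W W \<longleftrightarrow> bij_betw f W W" unfolding g by (intro bij_betw_cong) simp
    ultimately have "bij_betw g W W" by simp
    then show "g \<in> supp_bij M W W" using f unfolding g supp_bij_def by simp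
  qed
qed

lemma det_pivot:
  assumes v: "v \<notin> W" and w: "w \<notin> W" and zero: "\<forall>u \<in> W. \<not> M u w"
  shows "det_F2 M (insert v W) (insert w W) \<longleftrightarrow> M v w \<and> det_F2 M W W"
proof (cases "M v w")
  case False
  then have "supp_bij M (insert v W) (insert w W) = {}"
    using supp_bij_maps_pivot[of W M w _ v, OF zero] unfolding supp_bij_def by force
  then show ?thesis using False unfolding det_F2_supp_bij by simp
next
  case True
  have "card (supp_bij M (insert v W) (insert w W)) = card (supp_bij M W W)"
    using bij_betw_same_card[OF supp_bij_border[of v W w M, OF v w True zero]] by simp
  then show ?thesis using True unfolding det_F2_supp_bij by simp
qed

subsection \<open>Eliminating a vertex pair from the adjacency matrix\<close>

lemma rank_elimination:
  assumes fin: "finite W" and v: "v \<notin> W" and w: "w \<notin> W" and sub: "av \<subseteq> W" "aw \<subseteq> W"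
    and row: "\<forall>c \<in> W. A v c \<longleftrightarrow> odd (card {a \<in> av. A a c})"
    and col: "\<forall>u \<in> W. \<not> add_cols A w aw u w"
  shows "rank_F2 A (insert v W) (insert w W) = rank_F2 A W W + of_bool (add_cols A w aw v w)"
proof -
  let ?M = "add_cols A w aw"
  have agree: "\<forall>u \<in> R. \<forall>c \<in> W. ?M u c = A u c" for R
    using w unfolding add_cols_def by auto
  have "finite aw" using finite_subset[OF sub(2) fin] .
  then have "rank_F2 A (insert v W) (insert w W) = rank_F2 ?M (insert v W) (insert w W)"
    using rank_add_cols[of "insert v W" aw "insert w W" w A] fin sub(2) w by auto
  also have "\<dots> = rank_F2 A W W + of_bool (?M v w)"
  proof (cases "?M v w")
    case True
    then have "rank_F2 ?M (insert v W) (insert w W) = Suc (rank_F2 ?M W W)"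
      using rank_pivot[OF fin v, of ?M w W] col by simp
    then show ?thesis using rank_cong_entries[OF agree] True by simp
  next
    case False
    then have "rank_F2 ?M (insert v W) (insert w W) = rank_F2 ?M (insert v W) W"
      using col by (intro rank_zero_col) simp
    also have "\<dots> = rank_F2 A (insert v W) W" by (rule rank_cong_entries[OF agree])
    also have "\<dots> = rank_F2 A W W" by (rule rank_dependent_row[OF fin v sub(1) row])
    finally show ?thesis using False by simp
  qed
  finally show ?thesis .
qed

lemma det_elimination:
  assumes fin: "finite W" and v: "v \<notin> W" and w: "w \<notin> W" and sub: "aw \<subseteq> W"
    and col: "\<forall>u \<in> W. \<not> add_cols A w aw u w"
  shows "det_F2 A (insert v W) (insert w W) \<longleftrightarrow> add_cols A w aw v w \<and> det_F2 A W W"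
proof -
  let ?M = "add_cols A w aw"
  have "finite aw" using finite_subset[OF sub fin] .
  then have "det_F2 A (insert v W) (insert w W) \<longleftrightarrow> det_F2 ?M (insert v W) (insert w W)"
    using det_add_cols[of "insert v W" "insert w W" w aw A] fin sub w by auto
  also have "\<dots> \<longleftrightarrow> ?M v w \<and> det_F2 ?M W W" using det_pivot[OF v w, of ?M] col by simp
  also have "det_F2 ?M W W \<longleftrightarrow> det_F2 A W W"
    using w by (intro det_cong_entries) (auto simp: add_cols_def)
  finally show ?thesis .
qed

subsection \<open>The reduced form and the projections of basis vectors\<close>

lemma bform_vadd_left:
  assumes "finite x" "finite y" "finite z"
  shows "bform A (vadd x y) z \<longleftrightarrow> (bform A x z \<noteq> bform A y z)"
proof -
  define pairs where "pairs s = {(a, b). a \<in> s \<and> b \<in> z \<and> A a b}" for s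
  have "pairs (vadd x y) = vadd (pairs x) (pairs y)" unfolding pairs_def vadd_def by auto
  moreover have "finite (pairs s)" if "finite s" for s
    using finite_subset[of "pairs s" "s \<times> z"] that assms(3) unfolding pairs_def by auto
  ultimately show ?thesis
    unfolding bform_def pairs_def[symmetric] using even_card_vadd[of "pairs x" "pairs y"] assms by simp
qed

lemma bform_sym:
  assumes "\<forall>a b. A a b = A b a"
  shows "bform A x y = bform A y x"
proof -
  have "{(a, b). a \<in> y \<and> b \<in> x \<and> A a b} = prod.swap ` {(a, b). a \<in> x \<and> b \<in> y \<and> A a b}"
    using assms by auto
  then show ?thesis unfolding bform_def by (simp add: card_image)
qed

lemma bform_singleton_right:
  assumes "finite x"
  shows "bform A x {c} \<longleftrightarrow> odd (card {a \<in> x. A a c})"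
proof -
  have "{(a, b). a \<in> x \<and> b \<in> {c} \<and> A a b} = (\<lambda>a. (a, c)) ` {a \<in> x. A a c}" by auto
  moreover have "inj_on (\<lambda>a. (a, c)) {a \<in> x. A a c}" by (auto intro: inj_onI)
  ultimately show ?thesis unfolding bform_def by (simp add: card_image)
qed

lemma proj_orth_singleton:
  assumes red: "reducible V A W" and v: "v \<in> V - W"
  obtains a where "a \<subseteq> W" "proj_orth V A W {v} = insert v a" "insert v a \<in> orth V A W"
proof -
  obtain a b where ab: "a \<in> span_basis W" "b \<in> orth V A W" "{v} = vadd a b"
    using red v unfolding reducible_def by blast
  have "vadd {v} b = a" using ab(3) unfolding vadd_def by auto
  then have "\<exists>p. p \<in> orth V A W \<and> vadd {v} p \<in> span_basis W" using ab by auto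
  then have "proj_orth V A W {v} \<in> orth V A W \<and> vadd {v} (proj_orth V A W {v}) \<in> span_basis W"
    unfolding proj_orth_def by (rule someI_ex)
  then have p: "proj_orth V A W {v} \<in> orth V A W" "vadd {v} (proj_orth V A W {v}) \<subseteq> W"
    unfolding span_basis_def by auto
  let ?p = "proj_orth V A W {v}"
  have "v \<in> ?p" using p(2) v unfolding vadd_def by auto
  then have "?p = insert v (?p - {v})" by auto
  moreover have "?p - {v} \<subseteq> W" using p(2) unfolding vadd_def by auto
  ultimately show ?thesis using that p(1) by metis
qed

lemma orth_parity:
  assumes "finite V" "insert v a \<in> orth V A W" "v \<notin> a" "c \<in> W"
  shows "A v c \<longleftrightarrow> odd (card {b \<in> a. A b c})"
proof -
  have "insert v a \<subseteq> V" "\<not> bform A (insert v a) {c}"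
    using assms(2,4) unfolding orth_def span_basis_def by auto
  moreover have "finite a" using calculation(1) assms(1) finite_subset by auto
  ultimately show ?thesis
    using bform_singleton_right[of "insert v a" A c] card_insert_filter[of a v] assms(3)
    by (cases "A v c") simp_all
qed

lemma bform_projections:
  assumes fin: "finite W" and sym: "\<forall>a b. A a b = A b a"
    and av: "av \<subseteq> W" "v \<notin> W" and aw: "aw \<subseteq> W" "w \<notin> W" and q: "insert w aw \<in> orth V A W"
  shows "bform A (insert v av) (insert w aw) \<longleftrightarrow> add_cols A w aw v w"
proof -
  let ?q = "insert w aw"
  have finite: "finite av" "finite aw" using av(1) aw(1) fin finite_subset by auto
  have "insert v av = vadd {v} av" using av unfolding vadd_def by auto
  then have "bform A (insert v av) ?q \<longleftrightarrow> (bform A {v} ?q \<noteq> bform A av ?q)"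
    using bform_vadd_left[of "{v}" av ?q A] finite by simp
  moreover have "\<not> bform A av ?q"
    using q av(1) bform_sym[OF sym] unfolding orth_def span_basis_def by auto
  moreover have "bform A {v} ?q \<longleftrightarrow> odd (card {b \<in> ?q. A b v})"
    using bform_sym[OF sym, of "{v}" ?q] bform_singleton_right[of ?q A v] finite(2) by simp
  moreover have "card {b \<in> ?q. A b v} = of_bool (A v w) + card {b \<in> aw. A v b}"
  proof -
    have "w \<notin> aw" using aw by blast
    moreover have "{b \<in> ?q. A b v} = {b \<in> ?q. A v b}" using sym by auto
    ultimately show ?thesis using card_insert_filter[OF finite(2), of w "A v"] by simp
  qed
  ultimately show ?thesis unfolding add_cols_def by (cases "A v w") simp_all
qed

theorem mainTheorem5:
  fixes V W :: "'v set" and A :: "'v \<Rightarrow> 'v \<Rightarrow> bool" and v w :: 'v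
  assumes "finite V"
    and "\<forall>a b. A a b = A b a"
    and "W \<subseteq> V"
    and "reducible V A W"
    and "v \<in> V - W" and "w \<in> V - W"
  shows "(snd (Gamma V A W) v w \<longleftrightarrow> rank_F2 A (insert v W) (insert w W) > rank_F2 A W W)
    \<and> (det_F2 A W W \<longrightarrow> (snd (Gamma V A W) v w \<longleftrightarrow> det_F2 A (insert v W) (insert w W)))"
proof -
  have fin: "finite W" using assms(1,3) finite_subset by blast
  obtain av where av: "av \<subseteq> W" "proj_orth V A W {v} = insert v av" "insert v av \<in> orth V A W"
    using proj_orth_singleton[OF assms(4,5)] .
  obtain aw where aw: "aw \<subseteq> W" "proj_orth V A W {w} = insert w aw" "insert w aw \<in> orth V A W"
    using proj_orth_singleton[OF assms(4,6)] .
  have row: "\<forall>c \<in> W. A v c \<longleftrightarrow> odd (card {a \<in> av. A a c})"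
    using orth_parity[OF assms(1) av(3)] av(1) assms(5) by blast
  have col: "\<forall>u \<in> W. \<not> add_cols A w aw u w"
    using orth_parity[OF assms(1) aw(3)] aw(1) assms(2,6) unfolding add_cols_def by auto
  have edge: "snd (Gamma V A W) v w \<longleftrightarrow> add_cols A w aw v w"
    using bform_projections[OF fin assms(2) av(1) _ aw(1) _ aw(3)] av(2) aw(2) assms(5,6)
    unfolding Gamma_def bformW_def by simp
  show ?thesis
    using rank_elimination[OF fin _ _ av(1) aw(1) row col] det_elimination[OF fin _ _ aw(1) col]
      edge assms(5,6) by auto
qed

end
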